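(* Let $r\ge0$, $\varphi\in[0,2\pi)$, $\sigma_0>0$, $\alpha_0\in\mathbb{C}$. Consider Bayesian estimation of a displacement $\alpha=\alpha_{\mathrm R}+i\alpha_{\mathrm I}$ with Gaussian prior $p(\alpha)=\frac{1}{2\pi\sigma_0^2}\exp(-|\alpha-\alpha_0|^2/(2\sigma_0^2))$, probe state $\hat S(re^{i\varphi})|0\rangle$, encoded state $\hat D(\alpha)\hat S(re^{i\varphi})|0\rangle$, and homodyne detection of $\hat q$, i.e. likelihood $p(q|\alpha)=|\langle q|\hat D(\alpha)\hat S(re^{i\varphi})|0\rangle|^2$, $q\in\mathbb{R}$. Write $\Gamma=\cosh 2r-\cos\varphi\,\sinh 2r$. Then: (i) the posterior marginal of $\alpha_{\mathrm I}$ coincides with the prior marginal, and the posterior marginal of $\alpha_{\mathrm R}$ is Gaussian with mean $\hat\alpha_{\mathrm R}(q)=\dfrac{2\sqrt2\,\sigma_0^2 q+\alpha_{0,\mathrm R}\Gamma}{4\sigma_0^2+\Gamma}$ and variance $\dfrac{\sigma_0^2\Gamma}{4\sigma_0^2+\Gamma}$, independent of $q$; (ii) this variance is minimized over $\varphi$ at $\varphi=0$, where the average posterior variance of $\alpha_{\mathrm R}$ equals $\bar V^{\hat q}_{\mathrm{post}}=\big(\tfrac{1}{\sigma_0^2}+4e^{2r}\big)^{-1}$; (iii) if the same measurement (probe $\hat S(r)|0\rangle$, homodyne of $\hat q$) is repeated $m$ times on independent copies with Bayesian updating (each posterior used as the prior of the next round), the posterior of $\alpha_{\mathrm R}$ after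 $m$ rounds is Gaussian with variance $\sigma_m^2=\big(\tfrac{1}{\sigma_0^2}+4m\,e^{2r}\big)^{-1}$, independent of the outcomes.
   Context: Single bosonic mode with $[\hat a,\hat a^\dagger]=1$, quadrature $\hat q=(\hat a+\hat a^\dagger)/\sqrt2$ with generalized eigenstates $|q\rangle$ normalized as $\langle q|q'\rangle=\delta(q-q')$; homodyne detection of $\hat q$ is the POVM $\{|q\rangle\langle q|\}_{q\in\mathbb{R}}$. Displacement operator $\hat D(\alpha)=\exp(\alpha\hat a^\dagger-\alpha^*\hat a)$, squeezing operator $\hat S(\xi)=\exp[\tfrac12(\xi^*\hat a^2-\xi\hat a^{\dagger2})]$, $|0\rangle$ the vacuum. Posterior via Bayes' law $p(\alpha|q)=p(q|\alpha)p(\alpha)/\int d\alpha'\,p(q|\alpha')p(\alpha')$; the average posterior variance is the posterior variance averaged over outcomes $q$ with respect to $p(q)=\int d\alpha\,p(q|\alpha)p(\alpha)$. *)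

theory Defs
  imports "HOL-Probability.Probability"
begin

text \<open>Position-representation wavefunction of the squeezed vacuum
  S(r e^{i phi})|0>, with S(xi) = exp[(xi^* a^2 - xi a^{dagger 2})/2],
  q = (a + a^dagger)/sqrt 2, <q|q'> = delta(q - q').\<close>
definition squeezed_wf :: "real \<Rightarrow> real \<Rightarrow> real \<Rightarrow> complex" where
  "squeezed_wf r \<phi> q =
     complex_of_real (pi powr (-1/4)) * inverse (csqrt (cosh r - cis \<phi> * sinh r)) *
     exp (- (complex_of_real (q\<^sup>2 / 2)) * (1 + cis \<phi> * tanh r) / (1 - cis \<phi> * tanh r))"

text \<open>Action of the displacement operator D(alpha) in position representation:
  (D(alpha) psi)(q) = exp(i(sqrt 2 Im alpha q - Re alpha Im alpha)) psi(q - sqrt 2 Re alpha).\<close>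
definition displace_wf :: "complex \<Rightarrow> (real \<Rightarrow> complex) \<Rightarrow> real \<Rightarrow> complex" where
  "displace_wf \<alpha> \<psi> q =
     exp (\<i> * complex_of_real (sqrt 2 * Im \<alpha> * q - Re \<alpha> * Im \<alpha>)) * \<psi> (q - sqrt 2 * Re \<alpha>)"

definition likelihood :: "real \<Rightarrow> real \<Rightarrow> real \<Rightarrow> complex \<Rightarrow> real" where
  "likelihood r \<phi> q \<alpha> = (cmod (displace_wf \<alpha> (squeezed_wf r \<phi>) q))\<^sup>2"

definition gauss_prior :: "complex \<Rightarrow> real \<Rightarrow> complex \<Rightarrow> real" where
  "gauss_prior \<alpha>0 \<sigma>0 \<alpha> = exp (- (cmod (\<alpha> - \<alpha>0))\<^sup>2 / (2 * \<sigma>0\<^sup>2)) / (2 * pi * \<sigma>0\<^sup>2)"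

definition bayes_update :: "(real \<Rightarrow> complex \<Rightarrow> real) \<Rightarrow> (complex \<Rightarrow> real) \<Rightarrow> real \<Rightarrow> complex \<Rightarrow> real" where
  "bayes_update lik p q \<alpha> = lik q \<alpha> * p \<alpha> / (LINT \<beta>|lborel. lik q \<beta> * p \<beta>)"

definition evidence :: "(real \<Rightarrow> complex \<Rightarrow> real) \<Rightarrow> (complex \<Rightarrow> real) \<Rightarrow> real \<Rightarrow> real" where
  "evidence lik p q = (LINT \<beta>|lborel. lik q \<beta> * p \<beta>)"

definition marg_R :: "(complex \<Rightarrow> real) \<Rightarrow> real \<Rightarrow> real" where
  "marg_R f x = (LINT y|lborel. f (Complex x y))"

definition marg_I :: "(complex \<Rightarrow> real) \<Rightarrow> real \<Rightarrow> real" where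
  "marg_I f y = (LINT x|lborel. f (Complex x y))"

definition mean_R :: "(complex \<Rightarrow> real) \<Rightarrow> real" where
  "mean_R f = (LINT x|lborel. x * marg_R f x)"

definition var_R :: "(complex \<Rightarrow> real) \<Rightarrow> real" where
  "var_R f = (LINT x|lborel. (x - mean_R f)\<^sup>2 * marg_R f x)"

definition avg_post_var_R :: "(real \<Rightarrow> complex \<Rightarrow> real) \<Rightarrow> (complex \<Rightarrow> real) \<Rightarrow> real" where
  "avg_post_var_R lik p = (LINT q|lborel. evidence lik p q * var_R (bayes_update lik p q))"

primrec seq_post :: "(real \<Rightarrow> complex \<Rightarrow> real) \<Rightarrow> (complex \<Rightarrow> real) \<Rightarrow> (nat \<Rightarrow> real) \<Rightarrow> nat \<Rightarrow> complex \<Rightarrow> real" where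
  "seq_post lik p qs 0 = p"
| "seq_post lik p qs (Suc k) = bayes_update lik (seq_post lik p qs k) (qs k)"

definition Gamma_sq :: "real \<Rightarrow> real \<Rightarrow> real" where
  "Gamma_sq r \<phi> = cosh (2 * r) - cos \<phi> * sinh (2 * r)"

end

theory Submission
  imports Defs
begin

(*
  The homodyne likelihood is Gaussian in q: the squeezed vacuum has position density
  |psi(y)|^2 = exp(-y^2/Gamma)/sqrt(pi Gamma), with Gamma = |cosh r - e^{i phi} sinh r|^2, and the
  displacement only shifts its argument by sqrt 2 Re alpha and multiplies by a phase. So the
  likelihood is a normal density with mean sqrt 2 Re alpha and variance Gamma/2, not depending on
  Im alpha. A prior that is a product of normal densities in Re alpha and Im alpha is therefore
  conjugate: completing the square, the posterior is again such a product, the Im alpha factor is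
  unchanged and the precision of the Re alpha factor grows by 4/Gamma, independently of q.
  Gamma is smallest at phi = 0, where it equals e^{-2r}; m rounds add 4 m e^{2r} to the precision.
*)

lemma of_real_cosh_sinh_tanh:
  "cosh (complex_of_real r) = complex_of_real (cosh r)"
  "sinh (complex_of_real r) = complex_of_real (sinh r)"
  "tanh (complex_of_real r) = complex_of_real (tanh r)"
  by (simp_all add: cosh_def sinh_def tanh_def scaleR_conv_of_real flip: exp_of_real)

lemma Gamma_sq_pos: "Gamma_sq r \<phi> > 0"
proof -
  have "\<bar>cos \<phi> * sinh (2 * r)\<bar> \<le> \<bar>sinh (2 * r)\<bar>"
    by (simp add: abs_mult mult_left_le_one_le)
  moreover have "\<bar>sinh (2 * r)\<bar> < cosh (2 * r)"
  proof (rule power2_less_imp_less)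
    show "\<bar>sinh (2 * r)\<bar>\<^sup>2 < (cosh (2 * r))\<^sup>2" using cosh_square_eq[of "2 * r"] by simp
  qed simp
  ultimately show ?thesis unfolding Gamma_sq_def by linarith
qed

lemma Gamma_sq_eq_sum_squares:
  "Gamma_sq r \<phi> = (cosh r - cos \<phi> * sinh r)\<^sup>2 + (sin \<phi> * sinh r)\<^sup>2"
proof -
  have "(cosh r - cos \<phi> * sinh r)\<^sup>2 + (sin \<phi> * sinh r)\<^sup>2
      = (cosh r)\<^sup>2 + ((cos \<phi>)\<^sup>2 + (sin \<phi>)\<^sup>2) * (sinh r)\<^sup>2 - 2 * cos \<phi> * sinh r * cosh r"
    by algebra
  then show ?thesis unfolding Gamma_sq_def cosh_double sinh_double by simp
qed

lemma Gamma_sq_zero: "Gamma_sq r 0 = exp (- (2 * r))"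
  unfolding Gamma_sq_def by (simp add: cosh_minus_sinh)

lemma Gamma_sq_zero_le:
  assumes "r \<ge> 0"
  shows "Gamma_sq r 0 \<le> Gamma_sq r \<phi>"
proof -
  have "cos \<phi> * sinh (2 * r) \<le> 1 * sinh (2 * r)"
    by (rule mult_right_mono) (use assms in simp_all)
  then show ?thesis unfolding Gamma_sq_def by simp
qed

lemma norm_squeezing_factor:
  "cmod (complex_of_real (cosh r) - cis \<phi> * complex_of_real (sinh r)) = sqrt (Gamma_sq r \<phi>)"
  unfolding Gamma_sq_eq_sum_squares cmod_def by simp

lemma Re_squeezing_exponent:
  "Re ((1 + cis \<phi> * complex_of_real (tanh r)) / (1 - cis \<phi> * complex_of_real (tanh r)))
     = 1 / Gamma_sq r \<phi>"
proof -
  define c d where "c = cosh r" and "d = sinh r"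
  have c: "c \<noteq> 0" unfolding c_def by simp
  then have "1 + cis \<phi> * complex_of_real (tanh r) = (c + cis \<phi> * d) / c"
    and "1 - cis \<phi> * complex_of_real (tanh r) = (c - cis \<phi> * d) / c"
    unfolding tanh_def c_def d_def by (simp_all add: field_simps)
  then have "(1 + cis \<phi> * complex_of_real (tanh r)) / (1 - cis \<phi> * complex_of_real (tanh r))
      = (c + cis \<phi> * d) / (c - cis \<phi> * d)"
    using c by simp
  also have "Re \<dots> = 1 / Gamma_sq r \<phi>"
  proof -
    have "Re (c + cis \<phi> * d) * Re (c - cis \<phi> * d) + Im (c + cis \<phi> * d) * Im (c - cis \<phi> * d)
        = (c + cos \<phi> * d) * (c - cos \<phi> * d) - (sin \<phi> * d) * (sin \<phi> * d)"
      by simp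
    also have "\<dots> = c\<^sup>2 - ((cos \<phi>)\<^sup>2 + (sin \<phi>)\<^sup>2) * d\<^sup>2"
      by algebra
    also have "\<dots> = 1"
      using cosh_square_eq[of r] unfolding c_def d_def by simp
    moreover have "(Re (c - cis \<phi> * d))\<^sup>2 + (Im (c - cis \<phi> * d))\<^sup>2 = Gamma_sq r \<phi>"
      unfolding Gamma_sq_eq_sum_squares c_def d_def by simp
    ultimately show ?thesis unfolding Re_divide by simp
  qed
  finally show ?thesis .
qed

lemma squeezed_wf_cmod_power2:
  "(cmod (squeezed_wf r \<phi> y))\<^sup>2 = exp (- y\<^sup>2 / Gamma_sq r \<phi>) / sqrt (pi * Gamma_sq r \<phi>)"
proof -
  define G where "G = Gamma_sq r \<phi>"
  have G: "G > 0" unfolding G_def by (rule Gamma_sq_pos)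
  have prefactor: "(pi powr (-1/4))\<^sup>2 = 1 / sqrt pi"
    by (simp add: power2_eq_square flip: powr_add) (simp add: powr_minus_divide powr_half_sqrt)
  have normalisation: "(cmod (inverse (csqrt (complex_of_real (cosh r) - cis \<phi> * complex_of_real (sinh r)))))\<^sup>2
      = 1 / sqrt G"
    unfolding norm_inverse norm_csqrt norm_squeezing_factor G_def[symmetric]
    using G by (simp add: power_inverse divide_inverse)
  have Re_scale: "Re (complex_of_real k * w) = k * Re w" for k w
    by simp
  have exponent: "- complex_of_real (y\<^sup>2 / 2) * (1 + cis \<phi> * complex_of_real (tanh r))
            / (1 - cis \<phi> * complex_of_real (tanh r))
      = complex_of_real (- y\<^sup>2 / 2) * ((1 + cis \<phi> * complex_of_real (tanh r))
            / (1 - cis \<phi> * complex_of_real (tanh r)))"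
    by simp
  have "Re (- complex_of_real (y\<^sup>2 / 2) * (1 + cis \<phi> * complex_of_real (tanh r))
            / (1 - cis \<phi> * complex_of_real (tanh r))) = - y\<^sup>2 / (2 * G)"
    unfolding exponent Re_scale Re_squeezing_exponent G_def by simp
  then have gaussian: "(cmod (exp (- complex_of_real (y\<^sup>2 / 2) * (1 + cis \<phi> * complex_of_real (tanh r))
            / (1 - cis \<phi> * complex_of_real (tanh r)))))\<^sup>2 = exp (- y\<^sup>2 / G)"
    unfolding norm_exp_eq_Re by (simp add: power2_eq_square flip: exp_add)
  show ?thesis
    unfolding squeezed_wf_def of_real_cosh_sinh_tanh norm_mult power_mult_distrib
      normalisation gaussian G_def[symmetric]
    using prefactor by (simp add: real_sqrt_mult)
qed

lemma likelihood_eq_normal_density: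
  "likelihood r \<phi> q \<alpha> = normal_density (sqrt 2 * Re \<alpha>) (sqrt (Gamma_sq r \<phi> / 2)) q"
proof -
  have G: "Gamma_sq r \<phi> > 0" by (rule Gamma_sq_pos)
  have phase: "cmod (exp (\<i> * complex_of_real t)) = 1" for t
    unfolding norm_exp_eq_Re by simp
  have "likelihood r \<phi> q \<alpha> = (cmod (squeezed_wf r \<phi> (q - sqrt 2 * Re \<alpha>)))\<^sup>2"
    unfolding likelihood_def displace_wf_def norm_mult phase by simp
  then show ?thesis
    unfolding squeezed_wf_cmod_power2 normal_density_def using G by (simp add: power2_commute)
qed

lemma normal_density_linear_mean_mult:
  fixes c s \<sigma> \<mu> q x :: real
  assumes s: "s > 0" and \<sigma>: "\<sigma> > 0"
  defines "T \<equiv> s\<^sup>2 + c\<^sup>2 * \<sigma>\<^sup>2"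
  shows "normal_density (c * x) s q * normal_density \<mu> \<sigma> x =
    normal_density (c * \<mu>) (sqrt T) q *
    normal_density ((c * \<sigma>\<^sup>2 * q + \<mu> * s\<^sup>2) / T) (sqrt (s\<^sup>2 * \<sigma>\<^sup>2 / T)) x"
proof -
  have T: "T > 0" unfolding T_def using s \<sigma> by (simp add: add_pos_nonneg)
  have completed_square: "\<sigma>\<^sup>2 * T * (q - c * x)\<^sup>2 + s\<^sup>2 * T * (x - \<mu>)\<^sup>2
      = s\<^sup>2 * \<sigma>\<^sup>2 * (q - c * \<mu>)\<^sup>2 + (T * x - (c * \<sigma>\<^sup>2 * q + \<mu> * s\<^sup>2))\<^sup>2"
    unfolding T_def by algebra
  have "- (q - c * x)\<^sup>2 / (2 * s\<^sup>2) + - (x - \<mu>)\<^sup>2 / (2 * \<sigma>\<^sup>2)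
      = - (\<sigma>\<^sup>2 * T * (q - c * x)\<^sup>2 + s\<^sup>2 * T * (x - \<mu>)\<^sup>2) / (2 * s\<^sup>2 * \<sigma>\<^sup>2 * T)"
    using s \<sigma> T by (simp add: field_simps)
  also have "\<dots> = - (q - c * \<mu>)\<^sup>2 / (2 * T)
      + - (x - (c * \<sigma>\<^sup>2 * q + \<mu> * s\<^sup>2) / T)\<^sup>2 / (2 * (s\<^sup>2 * \<sigma>\<^sup>2 / T))"
  proof -
    have "x - (c * \<sigma>\<^sup>2 * q + \<mu> * s\<^sup>2) / T = (T * x - (c * \<sigma>\<^sup>2 * q + \<mu> * s\<^sup>2)) / T"
      using T by (simp add: field_simps)
    then show ?thesis
      unfolding completed_square using s \<sigma> T by (simp add: field_simps power_divide power2_eq_square)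
  qed
  finally have exponent: "- (q - c * x)\<^sup>2 / (2 * s\<^sup>2) + - (x - \<mu>)\<^sup>2 / (2 * \<sigma>\<^sup>2)
      = - (q - c * \<mu>)\<^sup>2 / (2 * T)
      + - (x - (c * \<sigma>\<^sup>2 * q + \<mu> * s\<^sup>2) / T)\<^sup>2 / (2 * (s\<^sup>2 * \<sigma>\<^sup>2 / T))" .
  have "(2 * pi * s\<^sup>2) * (2 * pi * \<sigma>\<^sup>2) = (2 * pi * T) * (2 * pi * (s\<^sup>2 * \<sigma>\<^sup>2 / T))"
    using T by simp
  then have prefactor: "1 / sqrt (2 * pi * s\<^sup>2) * (1 / sqrt (2 * pi * \<sigma>\<^sup>2))
      = 1 / sqrt (2 * pi * T) * (1 / sqrt (2 * pi * (s\<^sup>2 * \<sigma>\<^sup>2 / T)))"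
    by (simp flip: real_sqrt_mult)
  have "(sqrt T)\<^sup>2 = T" "(sqrt (s\<^sup>2 * \<sigma>\<^sup>2 / T))\<^sup>2 = s\<^sup>2 * \<sigma>\<^sup>2 / T"
    using T by simp_all
  moreover have "(a * exp e1) * (b * exp e2) = (a * b) * exp (e1 + e2)" for a b e1 e2 :: real
    by (simp add: exp_add)
  ultimately show ?thesis
    unfolding normal_density_def by (simp only: exponent prefactor)
qed

lemma nn_integral_lborel_Re_Im_mult:
  fixes f g :: "real \<Rightarrow> ennreal"
  assumes [measurable]: "f \<in> borel_measurable borel" "g \<in> borel_measurable borel"
  shows "(\<integral>\<^sup>+\<alpha>. f (Re \<alpha>) * g (Im \<alpha>) \<partial>lborel) = (\<integral>\<^sup>+x. f x \<partial>lborel) * (\<integral>\<^sup>+y. g y \<partial>lborel)"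
proof -
  define F where "F = (\<lambda>b::complex. if b = 1 then f else g)"
  have "\<i> \<noteq> 1" by (simp add: complex_eq_iff)
  then have "(\<lambda>\<alpha>. f (Re \<alpha>) * g (Im \<alpha>)) = (\<lambda>\<alpha>. \<Prod>b\<in>Basis. F b (\<alpha> \<bullet> b))"
    and "(\<integral>\<^sup>+x. f x \<partial>lborel) * (\<integral>\<^sup>+y. g y \<partial>lborel) = (\<Prod>b\<in>Basis. integral\<^sup>N lborel (F b))"
    by (auto simp: Basis_complex_def F_def inner_complex_def mult.commute)
  moreover have "(\<integral>\<^sup>+\<alpha>. (\<Prod>b\<in>Basis. F b (\<alpha> \<bullet> b)) \<partial>lborel) = (\<Prod>b\<in>Basis. integral\<^sup>N lborel (F b))"
    by (rule nn_integral_lborel_prod) (simp_all add: F_def)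
  ultimately show ?thesis by simp
qed

lemma integral_lborel_Re_Im_mult:
  fixes f g :: "real \<Rightarrow> real"
  assumes "integrable lborel f" "integrable lborel g" "\<And>x. f x \<ge> 0" "\<And>y. g y \<ge> 0"
  shows "(LINT \<alpha>|lborel. f (Re \<alpha>) * g (Im \<alpha>)) = (LINT x|lborel. f x) * (LINT y|lborel. g y)"
proof (rule has_bochner_integral_integral_eq, rule has_bochner_integral_nn_integral)
  have [measurable]: "f \<in> borel_measurable borel" "g \<in> borel_measurable borel"
    using assms(1,2) by (simp_all add: borel_measurable_integrable)
  show "(\<lambda>\<alpha>. f (Re \<alpha>) * g (Im \<alpha>)) \<in> borel_measurable lborel"
    by measurable
  show "AE \<alpha> in lborel. 0 \<le> f (Re \<alpha>) * g (Im \<alpha>)" and "0 \<le> (LINT x|lborel. f x) * (LINT y|lborel. g y)"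
    using assms by (simp_all add: integral_nonneg)
  have "(\<integral>\<^sup>+\<alpha>. ennreal (f (Re \<alpha>) * g (Im \<alpha>)) \<partial>lborel)
      = (\<integral>\<^sup>+x. ennreal (f x) \<partial>lborel) * (\<integral>\<^sup>+y. ennreal (g y) \<partial>lborel)"
    using assms(3,4) by (simp add: ennreal_mult) (rule nn_integral_lborel_Re_Im_mult; measurable)
  also have "\<dots> = ennreal ((LINT x|lborel. f x) * (LINT y|lborel. g y))"
    using assms by (simp add: nn_integral_eq_integral ennreal_mult integral_nonneg)
  finally show "(\<integral>\<^sup>+\<alpha>. ennreal (f (Re \<alpha>) * g (Im \<alpha>)) \<partial>lborel)
      = ennreal ((LINT x|lborel. f x) * (LINT y|lborel. g y))" .
qed

definition product_normal_density :: "real \<Rightarrow> real \<Rightarrow> real \<Rightarrow> real \<Rightarrow> complex \<Rightarrow> real" where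
  "product_normal_density \<mu> \<sigma> \<nu> \<tau> \<alpha> = normal_density \<mu> \<sigma> (Re \<alpha>) * normal_density \<nu> \<tau> (Im \<alpha>)"

lemma gauss_prior_eq_product_normal_density:
  assumes "\<sigma> > 0"
  shows "gauss_prior \<alpha>0 \<sigma> = product_normal_density (Re \<alpha>0) \<sigma> (Im \<alpha>0) \<sigma>"
proof
  fix \<alpha>
  have "exp (- (cmod (\<alpha> - \<alpha>0))\<^sup>2 / (2 * \<sigma>\<^sup>2))
      = exp (- (Re \<alpha> - Re \<alpha>0)\<^sup>2 / (2 * \<sigma>\<^sup>2)) * exp (- (Im \<alpha> - Im \<alpha>0)\<^sup>2 / (2 * \<sigma>\<^sup>2))"
    by (simp add: cmod_power2 add_divide_distrib diff_divide_distrib flip: exp_add)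
  moreover have "2 * pi * \<sigma>\<^sup>2 = sqrt (2 * pi * \<sigma>\<^sup>2) * sqrt (2 * pi * \<sigma>\<^sup>2)"
    by simp
  ultimately show "gauss_prior \<alpha>0 \<sigma> \<alpha> = product_normal_density (Re \<alpha>0) \<sigma> (Im \<alpha>0) \<sigma> \<alpha>"
    unfolding gauss_prior_def product_normal_density_def normal_density_def by simp
qed

lemma integral_product_normal_density:
  assumes "\<sigma> > 0" "\<tau> > 0"
  shows "(LINT \<alpha>|lborel. product_normal_density \<mu> \<sigma> \<nu> \<tau> \<alpha>) = 1"
  unfolding product_normal_density_def
  using assms by (simp add: integral_lborel_Re_Im_mult integrable_normal_density integral_normal_density)

lemma marg_R_product_normal_density:
  assumes "\<tau> > 0"
  shows "marg_R (product_normal_density \<mu> \<sigma> \<nu> \<tau>) = normal_density \<mu> \<sigma>"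
  unfolding marg_R_def product_normal_density_def using assms by (simp add: integral_normal_density)

lemma marg_I_product_normal_density:
  assumes "\<sigma> > 0"
  shows "marg_I (product_normal_density \<mu> \<sigma> \<nu> \<tau>) = normal_density \<nu> \<tau>"
  unfolding marg_I_def product_normal_density_def using assms by (simp add: integral_normal_density)

lemma var_R_product_normal_density:
  assumes "\<sigma> > 0" "\<tau> > 0"
  shows "var_R (product_normal_density \<mu> \<sigma> \<nu> \<tau>) = \<sigma>\<^sup>2"
proof -
  have "mean_R (product_normal_density \<mu> \<sigma> \<nu> \<tau>) = \<mu>"
    unfolding mean_R_def marg_R_product_normal_density[OF assms(2)]
    using integral_normal_moment_nz_1[OF assms(1), of \<mu>] by (simp add: mult.commute)
  then show ?thesis
    unfolding var_R_def marg_R_product_normal_density[OF assms(2)]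
    using integral_normal_moment_even[OF assms(1), of \<mu> 1] by (simp add: mult.commute)
qed

lemma posterior_variance_eq_inverse:
  fixes \<sigma> G :: real
  assumes "\<sigma> > 0" "G > 0"
  shows "\<sigma>\<^sup>2 * G / (4 * \<sigma>\<^sup>2 + G) = inverse (1 / \<sigma>\<^sup>2 + 4 / G)"
  using assms by (simp add: field_simps)

lemma posterior_variance_pos:
  assumes "\<sigma> > 0"
  shows "\<sigma>\<^sup>2 * Gamma_sq r \<phi> / (4 * \<sigma>\<^sup>2 + Gamma_sq r \<phi>) > 0"
  using assms Gamma_sq_pos[of r \<phi>] by (simp add: posterior_variance_eq_inverse add_pos_pos)

lemma likelihood_mult_product_normal_density:
  fixes r \<phi> :: real
  assumes \<sigma>: "\<sigma> > 0"
  defines "G \<equiv> Gamma_sq r \<phi>"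
  shows "likelihood r \<phi> q \<alpha> * product_normal_density \<mu> \<sigma> \<nu> \<tau> \<alpha>
    = normal_density (sqrt 2 * \<mu>) (sqrt (G / 2 + 2 * \<sigma>\<^sup>2)) q *
      product_normal_density ((2 * sqrt 2 * \<sigma>\<^sup>2 * q + \<mu> * G) / (4 * \<sigma>\<^sup>2 + G))
        (sqrt (\<sigma>\<^sup>2 * G / (4 * \<sigma>\<^sup>2 + G))) \<nu> \<tau> \<alpha>"
proof -
  have G: "G > 0" unfolding G_def by (rule Gamma_sq_pos)
  define s where "s = sqrt (G / 2)"
  have s: "s > 0" and s2: "s\<^sup>2 = G / 2" unfolding s_def using G by simp_all
  have "4 * \<sigma>\<^sup>2 + G > 0" using G \<sigma> by (simp add: add_pos_pos)
  then have T: "s\<^sup>2 + (sqrt 2)\<^sup>2 * \<sigma>\<^sup>2 = G / 2 + 2 * \<sigma>\<^sup>2"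
    and mean: "(sqrt 2 * \<sigma>\<^sup>2 * q + \<mu> * s\<^sup>2) / (s\<^sup>2 + (sqrt 2)\<^sup>2 * \<sigma>\<^sup>2)
      = (2 * sqrt 2 * \<sigma>\<^sup>2 * q + \<mu> * G) / (4 * \<sigma>\<^sup>2 + G)"
    and var: "s\<^sup>2 * \<sigma>\<^sup>2 / (s\<^sup>2 + (sqrt 2)\<^sup>2 * \<sigma>\<^sup>2) = \<sigma>\<^sup>2 * G / (4 * \<sigma>\<^sup>2 + G)"
    unfolding s2 by (simp_all add: field_simps)
  show ?thesis
    using normal_density_linear_mean_mult[OF s \<sigma>, of "sqrt 2" "Re \<alpha>" q \<mu>]
    unfolding mean var unfolding T product_normal_density_def likelihood_eq_normal_density
      G_def[symmetric] s_def[symmetric]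
    by (simp only: mult.assoc[symmetric])
qed

lemma evidence_product_normal_density:
  assumes "\<sigma> > 0" "\<tau> > 0"
  shows "evidence (likelihood r \<phi>) (product_normal_density \<mu> \<sigma> \<nu> \<tau>) q
    = normal_density (sqrt 2 * \<mu>) (sqrt (Gamma_sq r \<phi> / 2 + 2 * \<sigma>\<^sup>2)) q"
  unfolding evidence_def likelihood_mult_product_normal_density[OF assms(1)]
  using assms(2) posterior_variance_pos[OF assms(1)] by (simp add: integral_product_normal_density)

lemma bayes_update_product_normal_density:
  fixes r \<phi> :: real
  assumes "\<sigma> > 0" "\<tau> > 0"
  defines "G \<equiv> Gamma_sq r \<phi>"
  shows "bayes_update (likelihood r \<phi>) (product_normal_density \<mu> \<sigma> \<nu> \<tau>) q
    = product_normal_density ((2 * sqrt 2 * \<sigma>\<^sup>2 * q + \<mu> * G) / (4 * \<sigma>\<^sup>2 + G))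
        (sqrt (\<sigma>\<^sup>2 * G / (4 * \<sigma>\<^sup>2 + G))) \<nu> \<tau>"
proof
  fix \<alpha>
  have "normal_density (sqrt 2 * \<mu>) (sqrt (G / 2 + 2 * \<sigma>\<^sup>2)) q > 0"
    using assms Gamma_sq_pos[of r \<phi>] unfolding G_def
    by (intro normal_density_pos) (simp add: add_pos_pos)
  then show "bayes_update (likelihood r \<phi>) (product_normal_density \<mu> \<sigma> \<nu> \<tau>) q \<alpha>
    = product_normal_density ((2 * sqrt 2 * \<sigma>\<^sup>2 * q + \<mu> * G) / (4 * \<sigma>\<^sup>2 + G))
        (sqrt (\<sigma>\<^sup>2 * G / (4 * \<sigma>\<^sup>2 + G))) \<nu> \<tau> \<alpha>"
    unfolding bayes_update_def evidence_def[symmetric]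
    unfolding evidence_product_normal_density[OF assms(1,2)]
      likelihood_mult_product_normal_density[OF assms(1)] G_def
    by simp
qed

lemma var_R_bayes_update_gauss_prior:
  assumes "\<sigma>0 > 0"
  shows "var_R (bayes_update (likelihood r \<phi>) (gauss_prior \<alpha>0 \<sigma>0) q)
    = inverse (1 / \<sigma>0\<^sup>2 + 4 / Gamma_sq r \<phi>)"
  unfolding gauss_prior_eq_product_normal_density[OF assms]
    bayes_update_product_normal_density[OF assms assms]
  using assms posterior_variance_pos[OF assms, of r \<phi>] Gamma_sq_pos[of r \<phi>]
  by (simp add: var_R_product_normal_density posterior_variance_eq_inverse)

lemma var_R_bayes_update_gauss_prior_zero_le:
  assumes "r \<ge> 0" "\<sigma>0 > 0"
  shows "var_R (bayes_update (likelihood r 0) (gauss_prior \<alpha>0 \<sigma>0) q)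
    \<le> var_R (bayes_update (likelihood r \<phi>) (gauss_prior \<alpha>0 \<sigma>0) q')"
proof -
  have "4 / Gamma_sq r \<phi> \<le> 4 / Gamma_sq r 0"
    using Gamma_sq_zero_le[OF assms(1)] Gamma_sq_pos by (simp add: frac_le)
  then show ?thesis
    unfolding var_R_bayes_update_gauss_prior[OF assms(2)]
    using assms(2) Gamma_sq_pos[of r \<phi>] by (intro le_imp_inverse_le) (simp_all add: add_pos_pos)
qed

lemma avg_post_var_R_gauss_prior:
  assumes "\<sigma>0 > 0"
  shows "avg_post_var_R (likelihood r \<phi>) (gauss_prior \<alpha>0 \<sigma>0) = inverse (1 / \<sigma>0\<^sup>2 + 4 / Gamma_sq r \<phi>)"
proof -
  have "sqrt (Gamma_sq r \<phi> / 2 + 2 * \<sigma>0\<^sup>2) > 0"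
    using assms Gamma_sq_pos[of r \<phi>] by (simp add: add_pos_pos)
  then show ?thesis
    unfolding avg_post_var_R_def var_R_bayes_update_gauss_prior[OF assms]
    unfolding gauss_prior_eq_product_normal_density[OF assms] evidence_product_normal_density[OF assms assms]
    by (simp add: integral_normal_density)
qed

lemma seq_post_gauss_prior:
  assumes \<sigma>0: "\<sigma>0 > 0"
  shows "\<exists>\<mu>. seq_post (likelihood r \<phi>) (gauss_prior \<alpha>0 \<sigma>0) qs m
    = product_normal_density \<mu> (sqrt (inverse (1 / \<sigma>0\<^sup>2 + 4 * real m / Gamma_sq r \<phi>))) (Im \<alpha>0) \<sigma>0"
proof (induction m)
  case 0
  show ?case
    using \<sigma>0 by (intro exI[of _ "Re \<alpha>0"]) (simp add: gauss_prior_eq_product_normal_density)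
next
  case (Suc m)
  define G where "G = Gamma_sq r \<phi>"
  define P where "P = 1 / \<sigma>0\<^sup>2 + 4 * real m / G"
  have G: "G > 0" unfolding G_def by (rule Gamma_sq_pos)
  have P: "P > 0" unfolding P_def using \<sigma>0 G by (simp add: add_pos_nonneg)
  obtain \<mu> where "seq_post (likelihood r \<phi>) (gauss_prior \<alpha>0 \<sigma>0) qs m
      = product_normal_density \<mu> (sqrt (inverse P)) (Im \<alpha>0) \<sigma>0"
    using Suc unfolding P_def G_def by blast
  moreover have "sqrt (inverse P) > 0" using P by simp
  moreover have "(sqrt (inverse P))\<^sup>2 * G / (4 * (sqrt (inverse P))\<^sup>2 + G) = inverse (P + 4 / G)"
    using posterior_variance_eq_inverse[of "sqrt (inverse P)" G] P G by (simp add: divide_inverse)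
  moreover have "P + 4 / G = 1 / \<sigma>0\<^sup>2 + 4 * real (Suc m) / G"
    unfolding P_def by (simp add: distrib_left add_divide_distrib)
  ultimately show ?case
    using \<sigma>0 by (simp add: bayes_update_product_normal_density G_def) blast
qed

theorem mainTheorem2:
  fixes r \<phi> \<sigma>0 :: real and \<alpha>0 :: complex
  assumes "r \<ge> 0" and "0 \<le> \<phi>" and "\<phi> < 2 * pi" and "\<sigma>0 > 0"
  shows
    "(\<forall>q y. marg_I (bayes_update (likelihood r \<phi>) (gauss_prior \<alpha>0 \<sigma>0) q) y
              = marg_I (gauss_prior \<alpha>0 \<sigma>0) y)
   \<and> (\<forall>q x. marg_R (bayes_update (likelihood r \<phi>) (gauss_prior \<alpha>0 \<sigma>0) q) x
              = normal_density
                  ((2 * sqrt 2 * \<sigma>0\<^sup>2 * q + Re \<alpha>0 * Gamma_sq r \<phi>) / (4 * \<sigma>0\<^sup>2 + Gamma_sq r \<phi>))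
                  (sqrt (\<sigma>0\<^sup>2 * Gamma_sq r \<phi> / (4 * \<sigma>0\<^sup>2 + Gamma_sq r \<phi>))) x)
   \<and> (\<forall>\<phi>'\<in>{0..<2 * pi}. \<forall>q q'.
         var_R (bayes_update (likelihood r 0) (gauss_prior \<alpha>0 \<sigma>0) q)
           \<le> var_R (bayes_update (likelihood r \<phi>') (gauss_prior \<alpha>0 \<sigma>0) q'))
   \<and> avg_post_var_R (likelihood r 0) (gauss_prior \<alpha>0 \<sigma>0) = inverse (1 / \<sigma>0\<^sup>2 + 4 * exp (2 * r))
   \<and> (\<forall>(m::nat) (qs::nat \<Rightarrow> real). \<exists>\<mu>. \<forall>x.
         marg_R (seq_post (likelihood r 0) (gauss_prior \<alpha>0 \<sigma>0) qs m) x
           = normal_density \<mu> (sqrt (inverse (1 / \<sigma>0\<^sup>2 + 4 * real m * exp (2 * r)))) x)"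
proof -
  note \<sigma>0 = \<open>\<sigma>0 > 0\<close>
  note prior = gauss_prior_eq_product_normal_density[OF \<sigma>0]
  note posterior = bayes_update_product_normal_density[OF \<sigma>0 \<sigma>0]
  have sd_pos: "sqrt (\<sigma>0\<^sup>2 * Gamma_sq r \<phi> / (4 * \<sigma>0\<^sup>2 + Gamma_sq r \<phi>)) > 0"
    using posterior_variance_pos[OF \<sigma>0] by simp
  have precision: "4 * x / Gamma_sq r 0 = 4 * x * exp (2 * r)" for x
    unfolding Gamma_sq_zero by (simp add: exp_minus divide_inverse)
  have seq: "\<exists>\<mu>. \<forall>x. marg_R (seq_post (likelihood r 0) (gauss_prior \<alpha>0 \<sigma>0) qs m) x
      = normal_density \<mu> (sqrt (inverse (1 / \<sigma>0\<^sup>2 + 4 * real m * exp (2 * r)))) x" for m qs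
    using seq_post_gauss_prior[OF \<sigma>0, of r 0 \<alpha>0 qs m] \<sigma>0
    by (auto simp: precision marg_R_product_normal_density)
  show ?thesis
    using var_R_bayes_update_gauss_prior_zero_le[OF \<open>r \<ge> 0\<close> \<sigma>0]
      avg_post_var_R_gauss_prior[OF \<sigma>0, of r 0 \<alpha>0] precision[of 1] seq
    by (simp add: prior posterior marg_R_product_normal_density[OF \<sigma>0]
        marg_I_product_normal_density[OF sd_pos] marg_I_product_normal_density[OF \<sigma>0])
qed

end
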